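(* The all-one vector $\mathbf 1=(1)_{t\in\mathbb F_{3^{2m}}}$ belongs to $\mathcal C_3(\mathbb D_d)$.
   Context: Let $m\ge 2$ be an integer. For $s\in\{m,2m\}$ let $\mathrm{Tr}_s:\mathbb F_{3^s}\to\mathbb F_3$ denote the absolute trace. Vectors in $\mathbb F_3^{3^{2m}}$ are indexed by $\mathbb F_{3^{2m}}$, and a function $f:\mathbb F_{3^{2m}}\to\mathbb F_3$ is identified with $(f(t))_{t\in\mathbb F_{3^{2m}}}$. Let $\mathcal C(2m,3)=\{(\mathrm{Tr}_{2m}(at^{3^m+1}+bt)+h)_{t\in\mathbb F_{3^{2m}}}: a\in\mathbb F_{3^m}, b\in\mathbb F_{3^{2m}}, h\in\mathbb F_3\}$, let $d$ be its minimum nonzero Hamming weight, let $\mathbb D_d$ be the incidence structure on $\mathbb F_{3^{2m}}$ whose blocks are the supports of the weight-$d$ codewords, and let $\mathcal C_3(\mathbb D_d)$ be the $\mathbb F_3$-span of the incidence vectors of the blocks (entry $1$ on the block, $0$ elsewhere). *)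

theory Defs
  imports Main
begin

text \<open>The ambient field F_{3^{2m}} is a finite field type 'a with CARD('a) = 3^(2m).
Vectors in F_3^{3^{2m}} indexed by F_{3^{2m}} are functions 'a => 'a with values in F_3.\<close>

definition abs_trace :: "nat \<Rightarrow> 'a::field \<Rightarrow> 'a" where
  "abs_trace s x = (\<Sum>i<s. x ^ (3 ^ i))"

definition prime_subfield3 :: "'a::field set" where
  "prime_subfield3 = {x. x ^ 3 = x}"

definition subfield3 :: "nat \<Rightarrow> 'a::field set" where
  "subfield3 s = {x. x ^ (3 ^ s) = x}"

definition code_C :: "nat \<Rightarrow> ('a::field \<Rightarrow> 'a) set" where
  "code_C m = {(\<lambda>t. abs_trace (2*m) (a * t ^ (3^m + 1) + b * t) + h) | a b h.
                 a \<in> subfield3 m \<and> h \<in> prime_subfield3}"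

definition hweight :: "('a::finite \<Rightarrow> 'b::zero) \<Rightarrow> nat" where
  "hweight c = card {t. c t \<noteq> 0}"

definition min_weight :: "('a::finite \<Rightarrow> 'b::zero) set \<Rightarrow> nat" where
  "min_weight C = Min {hweight c | c. c \<in> C \<and> c \<noteq> (\<lambda>_. 0)}"

definition design_blocks :: "('a::finite \<Rightarrow> 'b::zero) set \<Rightarrow> nat \<Rightarrow> 'a set set" where
  "design_blocks C d = {{t. c t \<noteq> 0} | c. c \<in> C \<and> hweight c = d}"

definition span_F3_incidence :: "('a::{finite} set) set \<Rightarrow> ('a \<Rightarrow> 'b::field) set" where
  "span_F3_incidence Bs =
     {(\<lambda>t. \<Sum>B\<in>Bs. coef B * (if t \<in> B then 1 else 0)) | coef.
        \<forall>B\<in>Bs. coef B \<in> prime_subfield3}"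

end

theory Submission
  imports Defs "HOL-Number_Theory.Residues"
begin

text \<open>
  The code is invariant under the translations \<open>t \<mapsto> t + s\<close>, so all translates of the
  support of one minimum-weight codeword are blocks, and it suffices to show that the constant
  \<open>1\<close> is an \<open>F\<^sub>3\<close>-combination of the translates of any nonzero \<open>F\<^sub>3\<close>-valued function \<open>g\<close>.
  Take a nonzero \<open>f\<close> in the span of these translates whose own translation span is minimal.
  The difference \<open>\<Delta>\<^sub>s f = f(\<cdot> + s) - f\<close> spans a subspace of it, and a proper one unless
  \<open>f = 0\<close>: in characteristic \<open>3\<close>, where also \<open>s + s + s = 0\<close>, one has \<open>\<Delta>\<^sub>s\<^sup>3 = 0\<close>. By minimality
  every \<open>\<Delta>\<^sub>s f\<close> vanishes, so \<open>f\<close> is a nonzero constant in \<open>F\<^sub>3\<close>, and a multiple of it is \<open>1\<close>.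
\<close>

section \<open>Finite fields of characteristic three\<close>

lemma field_power_card_minus_one:
  fixes x :: "'a::{field,finite}"
  assumes "x \<noteq> 0"
  shows "x ^ (card (UNIV :: 'a set) - 1) = 1"
proof -
  define G :: "'a monoid" where "G = \<lparr>carrier = UNIV - {0}, monoid.mult = (*), one = 1\<rparr>"
  have "comm_group G"
    unfolding G_def by (rule comm_groupI) (auto intro!: bexI[of _ "inverse _"])
  moreover have "x [^]\<^bsub>G\<^esub> n = x ^ n" for n :: nat
    by (induction n) (simp_all add: G_def)
  moreover have "card (carrier G) = card (UNIV :: 'a set) - 1"
    by (simp add: G_def card_Diff_singleton)
  ultimately show ?thesis
    using comm_group.power_order_eq_one[of G x] assms by (simp add: G_def)
qed

lemma field_power_card_eq_self:
  fixes x :: "'a::{field,finite}"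
  shows "x ^ card (UNIV :: 'a set) = x"
proof (cases "x = 0")
  case False
  have "card (UNIV :: 'a set) = Suc (card (UNIV :: 'a set) - 1)"
    using finite_UNIV_card_ge_0[where 'a = 'a] by simp
  then show ?thesis
    using field_power_card_minus_one[OF False] by (metis mult.right_neutral power_Suc)
qed (use finite_UNIV_card_ge_0[where 'a = 'a] in simp)

lemma three_eq_zero_if_card_power_three:
  assumes "card (UNIV :: 'a::{field,finite} set) = 3 ^ n" and "n > 0"
  shows "(3::'a) = 0"
proof -
  have "prime CHAR('a)"
    by (rule prime_CHAR_semidom) (simp add: finite_imp_CHAR_pos)
  moreover have "CHAR('a) dvd 3 ^ n"
    using CHAR_dvd_CARD[where 'a = 'a] assms(1) by simp
  ultimately have "CHAR('a) = 3"
    using prime_dvd_power primes_dvd_imp_eq[of "CHAR('a)" 3] by auto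
  then show ?thesis
    using of_nat_CHAR[where 'a = 'a] by simp
qed

lemma power3_add_char3:
  fixes x y :: "'a::comm_ring_1"
  assumes "(3::'a) = 0"
  shows "(x + y) ^ 3 = x ^ 3 + y ^ 3"
proof -
  have "(x + y) ^ 3 = x ^ 3 + y ^ 3 + 3 * (x\<^sup>2 * y + x * y\<^sup>2)"
    by (simp add: power3_eq_cube power2_eq_square algebra_simps)
  with assms show ?thesis by simp
qed

lemma triple_eq_0_char3:
  fixes x :: "'a::comm_ring_1"
  assumes "(3::'a) = 0"
  shows "x + x + x = 0"
proof -
  have "x + x + x = 3 * x"
    by (simp add: algebra_simps)
  with assms show ?thesis by simp
qed

lemma power_three_pow_add_char3:
  fixes x y :: "'a::comm_ring_1"
  assumes "(3::'a) = 0"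
  shows "(x + y) ^ (3 ^ k) = x ^ (3 ^ k) + y ^ (3 ^ k)"
proof (induction k)
  case (Suc k)
  have "(x + y) ^ (3 ^ Suc k) = ((x + y) ^ (3 ^ k)) ^ 3"
    by (simp add: power_mult[symmetric] mult.commute)
  also have "\<dots> = (x ^ (3 ^ k)) ^ 3 + (y ^ (3 ^ k)) ^ 3"
    using Suc power3_add_char3[OF assms] by simp
  also have "\<dots> = x ^ (3 ^ Suc k) + y ^ (3 ^ Suc k)"
    by (simp add: power_mult[symmetric] mult.commute)
  finally show ?case .
qed simp

lemma sum_power3_char3:
  fixes f :: "'b \<Rightarrow> 'a::comm_ring_1"
  assumes "(3::'a) = 0"
  shows "(\<Sum>i\<in>A. f i) ^ 3 = (\<Sum>i\<in>A. f i ^ 3)"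
  by (induction A rule: infinite_finite_induct) (simp_all add: power3_add_char3[OF assms])

lemma prime_subfield3_0 [simp]: "0 \<in> prime_subfield3"
  and prime_subfield3_1 [simp]: "1 \<in> prime_subfield3"
  and prime_subfield3_minus_1 [simp]: "- 1 \<in> prime_subfield3"
  by (simp_all add: prime_subfield3_def)

lemma prime_subfield3_add:
  "(3::'a::field) = 0 \<Longrightarrow> x \<in> prime_subfield3 \<Longrightarrow> y \<in> prime_subfield3 \<Longrightarrow>
    x + (y::'a) \<in> prime_subfield3"
  by (simp add: prime_subfield3_def power3_add_char3)

lemma prime_subfield3_mult:
  "x \<in> prime_subfield3 \<Longrightarrow> y \<in> prime_subfield3 \<Longrightarrow> x * (y::'a::field) \<in> prime_subfield3"
  by (simp add: prime_subfield3_def power_mult_distrib)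

lemma prime_subfield3_sum:
  "(3::'a::field) = 0 \<Longrightarrow> (\<And>i. i \<in> A \<Longrightarrow> f i \<in> prime_subfield3) \<Longrightarrow>
    (\<Sum>i\<in>A. f i :: 'a) \<in> prime_subfield3"
  by (induction A rule: infinite_finite_induct) (auto simp: prime_subfield3_add)

lemma prime_subfield3_square_eq_1:
  assumes "x \<in> prime_subfield3" and "x \<noteq> 0"
  shows "x * x = (1::'a::field)"
proof -
  have "x * (x * x) = x * 1"
    using assms(1) by (simp add: prime_subfield3_def power3_eq_cube)
  with assms(2) show ?thesis by simp
qed

lemma abs_trace_add:
  fixes x y :: "'a::field"
  assumes "(3::'a) = 0"
  shows "abs_trace s (x + y) = abs_trace s x + abs_trace s y"
  unfolding abs_trace_def by (simp add: power_three_pow_add_char3[OF assms] sum.distrib)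

lemma abs_trace_power3:
  fixes x :: "'a::field"
  assumes "x ^ (3 ^ s) = x"
  shows "abs_trace s (x ^ 3) = abs_trace s x"
proof -
  have "abs_trace s (x ^ 3) + x ^ (3 ^ 0) = (\<Sum>i<Suc s. x ^ (3 ^ i))"
    unfolding abs_trace_def sum.lessThan_Suc_shift by (simp add: power_mult[symmetric] mult.commute)
  also have "\<dots> = abs_trace s x + x ^ (3 ^ s)"
    unfolding abs_trace_def by simp
  finally show ?thesis
    using assms by simp
qed

lemma abs_trace_power_three_pow:
  fixes x :: "'a::field"
  assumes "\<And>y::'a. y ^ (3 ^ s) = y"
  shows "abs_trace s (x ^ (3 ^ k)) = abs_trace s x"
proof (induction k)
  case (Suc k)
  have "x ^ (3 ^ Suc k) = (x ^ (3 ^ k)) ^ 3"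
    by (simp add: power_mult[symmetric] mult.commute)
  with Suc show ?case
    using abs_trace_power3[OF assms] by simp
qed simp

lemma abs_trace_in_prime_subfield3:
  fixes x :: "'a::field"
  assumes "(3::'a) = 0" and "x ^ (3 ^ s) = x"
  shows "abs_trace s x \<in> prime_subfield3"
proof -
  have "abs_trace s x ^ 3 = abs_trace s (x ^ 3)"
    unfolding abs_trace_def
    by (simp add: sum_power3_char3[OF assms(1)] power_mult[symmetric] mult.commute)
  then show ?thesis
    using abs_trace_power3[OF assms(2)] by (simp add: prime_subfield3_def)
qed

section \<open>Translation invariance of the code\<close>

text \<open>
  With \<open>q = 3\<^sup>m\<close>, expanding \<open>a(t + s)\<^sup>q\<^sup>+\<^sup>1\<close> by Frobenius leaves the cross term \<open>a s t\<^sup>q\<close>, whose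
  trace equals that of \<open>(a s)\<^sup>q t\<close> because \<open>q\<^sup>2 = 3\<^sup>2\<^sup>m\<close>; it is absorbed into the linear coefficient.
\<close>
lemma code_C_translate:
  fixes c :: "'a::field \<Rightarrow> 'a"
  assumes three: "(3::'a) = 0" and frobenius: "\<And>x::'a. x ^ (3 ^ (2*m)) = x"
    and c: "c \<in> code_C m"
  shows "(\<lambda>t. c (t + s)) \<in> code_C m"
proof -
  obtain a b h where c_eq: "c = (\<lambda>t. abs_trace (2*m) (a * t ^ (3^m + 1) + b * t) + h)"
    and a: "a \<in> subfield3 m" and h: "h \<in> prime_subfield3"
    using c unfolding code_C_def by blast
  define q :: nat where "q = 3 ^ m"
  let ?T = "abs_trace (2*m) :: 'a \<Rightarrow> 'a"
  have q_q: "(x ^ q) ^ q = x" for x :: 'a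
    using frobenius[of x] by (simp add: q_def power_mult[symmetric] power_add[symmetric] mult_2)
  have T_add: "?T (x + y) = ?T x + ?T y" for x y
    by (rule abs_trace_add[OF three])
  have T_q: "?T (x ^ q) = ?T x" for x
    unfolding q_def by (rule abs_trace_power_three_pow[OF frobenius])
  define b' where "b' = (a * s) ^ q + a * s ^ q + b"
  define h' where "h' = ?T (a * s ^ (q + 1) + b * s) + h"
  have "(\<lambda>t. c (t + s)) = (\<lambda>t. ?T (a * t ^ (q + 1) + b' * t) + h')"
  proof
    fix t
    have "(t + s) ^ (q + 1) = (t ^ q + s ^ q) * (t + s)"
      using power_three_pow_add_char3[OF three, of t s m] by (simp add: q_def)
    then have "a * (t + s) ^ (q + 1) + b * (t + s)
        = (a * t ^ (q + 1) + (a * s ^ q + b) * t) + ((a * s) ^ q * t) ^ q + (a * s ^ (q + 1) + b * s)"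
      by (simp add: power_mult_distrib q_q algebra_simps)
    then have "?T (a * (t + s) ^ (q + 1) + b * (t + s))
        = ?T (a * t ^ (q + 1) + (a * s ^ q + b) * t) + ?T ((a * s) ^ q * t) + ?T (a * s ^ (q + 1) + b * s)"
      by (simp add: T_add T_q)
    also have "\<dots> = ?T (a * t ^ (q + 1) + b' * t) + ?T (a * s ^ (q + 1) + b * s)"
    proof -
      have "a * t ^ (q + 1) + b' * t = (a * t ^ (q + 1) + (a * s ^ q + b) * t) + (a * s) ^ q * t"
        by (simp add: b'_def algebra_simps)
      then show ?thesis
        by (simp only: T_add)
    qed
    finally show "c (t + s) = ?T (a * t ^ (q + 1) + b' * t) + h'"
      by (simp add: c_eq h'_def q_def add.assoc)
  qed
  moreover have "h' \<in> prime_subfield3"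
    unfolding h'_def by (intro prime_subfield3_add[OF three] h abs_trace_in_prime_subfield3[OF three frobenius])
  ultimately show ?thesis
    using a unfolding code_C_def q_def by blast
qed

lemma const_one_in_code_C: "(\<lambda>_. 1) \<in> code_C m"
proof -
  have "(\<lambda>_. 1::'a) = (\<lambda>t. abs_trace (2*m) (0 * t ^ (3^m + 1) + 0 * t) + 1)"
    by (simp add: abs_trace_def zero_power)
  moreover have "(0::'a) \<in> subfield3 m"
    by (simp add: subfield3_def)
  ultimately show ?thesis
    unfolding code_C_def by fastforce
qed

lemma hweight_le_card:
  fixes c :: "'a::finite \<Rightarrow> 'b::zero"
  shows "hweight c \<le> card (UNIV :: 'a set)"
  unfolding hweight_def by (rule card_mono) simp_all

lemma min_weight_attained:
  fixes C :: "('a::finite \<Rightarrow> 'b::zero) set"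
  assumes "c \<in> C" and "c \<noteq> (\<lambda>_. 0)"
  obtains c0 where "c0 \<in> C" "c0 \<noteq> (\<lambda>_. 0)" "hweight c0 = min_weight C"
proof -
  let ?W = "{hweight c | c. c \<in> C \<and> c \<noteq> (\<lambda>_. 0)}"
  have "finite ?W"
    unfolding finite_nat_set_iff_bounded_le using hweight_le_card by blast
  moreover have "hweight c \<in> ?W"
    using assms by (intro CollectI exI[of _ c]) simp
  ultimately have "Min ?W \<in> ?W"
    by (intro Min_in) auto
  then obtain c0 where c0: "c0 \<in> C" "c0 \<noteq> (\<lambda>_. 0)" "Min ?W = hweight c0"
    unfolding mem_Collect_eq by (elim exE conjE) (rule that)
  show ?thesis
    by (rule that[OF c0(1,2)]) (simp add: c0(3) min_weight_def)
qed

lemma hweight_translate: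
  fixes c :: "'a::{finite,group_add} \<Rightarrow> 'b::zero"
  shows "hweight (\<lambda>t. c (t + s)) = hweight c"
proof -
  have "bij_betw (\<lambda>t. t + s) {t. c (t + s) \<noteq> 0} {t. c t \<noteq> 0}"
    by (rule bij_betwI[where g = "\<lambda>t. t - s"]) auto
  then show ?thesis
    unfolding hweight_def by (rule bij_betw_same_card)
qed

lemma translate_support_in_design_blocks:
  fixes C :: "('a::{finite,group_add} \<Rightarrow> 'b::zero) set"
  assumes "\<And>c s. c \<in> C \<Longrightarrow> (\<lambda>t. c (t + s)) \<in> C"
    and "c \<in> C" and "hweight c = d"
  shows "{t. c (t + s) \<noteq> 0} \<in> design_blocks C d"
  unfolding design_blocks_def
  by (intro CollectI exI[of _ "\<lambda>t. c (t + s)"]) (simp add: assms hweight_translate)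

section \<open>Spans of translates\<close>

definition translate_span :: "('g::{finite,ab_group_add} \<Rightarrow> 'a::field) \<Rightarrow> ('g \<Rightarrow> 'a) set" where
  "translate_span g =
     {(\<lambda>t. \<Sum>s\<in>UNIV. coef s * g (t + s)) | coef. \<forall>s. coef s \<in> prime_subfield3}"

definition forward_diff :: "'g::ab_group_add \<Rightarrow> ('g \<Rightarrow> 'a::ab_group_add) \<Rightarrow> 'g \<Rightarrow> 'a" where
  "forward_diff s f = (\<lambda>t. f (t + s) - f t)"

lemma translate_spanE:
  assumes "f \<in> translate_span g"
  obtains coef where "\<forall>s. coef s \<in> prime_subfield3" "f = (\<lambda>t. \<Sum>s\<in>UNIV. coef s * g (t + s))"
  using assms unfolding translate_span_def by blast

lemma translate_spanI:
  "\<forall>s. coef s \<in> prime_subfield3 \<Longrightarrow> (\<lambda>t. \<Sum>s\<in>UNIV. coef s * g (t + s)) \<in> translate_span g"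
  unfolding translate_span_def by blast

lemma translate_span_self: "g \<in> translate_span g"
proof -
  have "g = (\<lambda>t. \<Sum>s\<in>UNIV. of_bool (s = 0) * g (t + s))"
    by simp
  moreover have "\<forall>s. of_bool (s = 0) \<in> prime_subfield3"
    by simp
  ultimately show ?thesis
    using translate_spanI[of "\<lambda>s. of_bool (s = 0)" g] by simp
qed

text \<open>The coefficients of the composite combination are the convolution of the two coefficient functions.\<close>
lemma translate_span_mono:
  fixes g :: "'g::{finite,ab_group_add} \<Rightarrow> 'a::field"
  assumes three: "(3::'a) = 0" and "f \<in> translate_span g"
  shows "translate_span f \<subseteq> translate_span g"
proof
  fix \<phi> assume "\<phi> \<in> translate_span f"
  then obtain c where c: "\<forall>s. c s \<in> prime_subfield3"
    and \<phi>: "\<phi> = (\<lambda>t. \<Sum>s\<in>UNIV. c s * f (t + s))"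
    by (rule translate_spanE)
  obtain d where d: "\<forall>s. d s \<in> prime_subfield3"
    and f: "f = (\<lambda>t. \<Sum>s\<in>UNIV. d s * g (t + s))"
    using assms(2) by (rule translate_spanE)
  define e where "e = (\<lambda>w. \<Sum>s\<in>UNIV. c s * d (w - s))"
  have "\<phi> t = (\<Sum>w\<in>UNIV. e w * g (t + w))" for t
  proof -
    have "\<phi> t = (\<Sum>s\<in>UNIV. \<Sum>u\<in>UNIV. c s * (d u * g (t + s + u)))"
      by (simp add: \<phi> f sum_distrib_left)
    also have "\<dots> = (\<Sum>s\<in>UNIV. \<Sum>w\<in>UNIV. c s * (d (w - s) * g (t + w)))"
    proof (rule sum.cong[OF refl])
      fix s
      show "(\<Sum>u\<in>UNIV. c s * (d u * g (t + s + u))) = (\<Sum>w\<in>UNIV. c s * (d (w - s) * g (t + w)))"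
        by (rule sum.reindex_bij_witness[of _ "\<lambda>w. w - s" "\<lambda>u. u + s"]) (auto simp: algebra_simps)
    qed
    also have "\<dots> = (\<Sum>w\<in>UNIV. e w * g (t + w))"
      by (subst sum.swap) (simp add: e_def sum_distrib_right mult.assoc)
    finally show ?thesis .
  qed
  moreover have "\<forall>w. e w \<in> prime_subfield3"
    using c d unfolding e_def by (auto intro!: prime_subfield3_sum[OF three] prime_subfield3_mult)
  ultimately show "\<phi> \<in> translate_span g"
    using translate_spanI[of e g] by presburger
qed

lemma forward_diff_in_translate_span:
  fixes f :: "'g::{finite,ab_group_add} \<Rightarrow> 'a::field"
  shows "forward_diff s f \<in> translate_span f"
proof -
  define c :: "'g \<Rightarrow> 'a" where "c u = of_bool (u = s) - of_bool (u = 0)" for u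
  have "forward_diff s f = (\<lambda>t. \<Sum>u\<in>UNIV. c u * f (t + u))"
    unfolding forward_diff_def c_def left_diff_distrib sum_subtractf by simp
  moreover have "\<forall>u. c u \<in> prime_subfield3"
    unfolding c_def by (simp add: of_bool_def)
  ultimately show ?thesis
    using translate_spanI[of c f] by simp
qed

lemma translate_span_forward_diff:
  assumes "\<phi> \<in> translate_span (forward_diff s f)"
  obtains \<psi> where "\<psi> \<in> translate_span f" "\<phi> = forward_diff s \<psi>"
proof -
  obtain c where c: "\<forall>u. c u \<in> prime_subfield3"
    and \<phi>: "\<phi> = (\<lambda>t. \<Sum>u\<in>UNIV. c u * forward_diff s f (t + u))"
    using assms by (rule translate_spanE)
  define \<psi> where "\<psi> = (\<lambda>t. \<Sum>u\<in>UNIV. c u * f (t + u))"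
  have "\<phi> = forward_diff s \<psi>"
    unfolding \<phi> \<psi>_def forward_diff_def
    by (simp add: algebra_simps sum_subtractf[symmetric])
  with that show ?thesis
    using translate_spanI[OF c] \<psi>_def by blast
qed

lemma forward_diff_cube_eq_0:
  fixes f :: "'g::ab_group_add \<Rightarrow> 'a::comm_ring_1"
  assumes "(3::'a) = 0" and "s + s + s = 0"
  shows "forward_diff s (forward_diff s (forward_diff s f)) = (\<lambda>_. 0)"
proof
  fix t
  have "forward_diff s (forward_diff s (forward_diff s f)) t
      = f (t + s + s + s) - 3 * f (t + s + s) + 3 * f (t + s) - f t"
    unfolding forward_diff_def by (simp add: algebra_simps)
  also have "t + s + s + s = t"
    using assms(2) by (simp add: add.assoc)
  finally show "forward_diff s (forward_diff s (forward_diff s f)) t = 0"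
    using assms(1) by simp
qed

text \<open>If \<open>\<Delta>\<^sub>s f\<close> spanned as much as \<open>f\<close>, then \<open>f\<close> would lie in the image of \<open>\<Delta>\<^sub>s\<^sup>3 = 0\<close>.\<close>
lemma translate_span_forward_diff_psubset:
  fixes f :: "'g::{finite,ab_group_add} \<Rightarrow> 'a::field"
  assumes three: "(3::'a) = 0" and "s + s + s = 0" and "f \<noteq> (\<lambda>_. 0)"
  shows "translate_span (forward_diff s f) \<subset> translate_span f"
proof -
  have sub: "translate_span (forward_diff s f) \<subseteq> translate_span f"
    by (rule translate_span_mono[OF three forward_diff_in_translate_span])
  have "translate_span (forward_diff s f) \<noteq> translate_span f"
  proof
    assume eq: "translate_span (forward_diff s f) = translate_span f"
    obtain p1 where p1: "p1 \<in> translate_span f" "f = forward_diff s p1"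
      using translate_span_forward_diff translate_span_self eq by metis
    obtain p2 where p2: "p2 \<in> translate_span f" "p1 = forward_diff s p2"
      using translate_span_forward_diff p1(1) eq by metis
    obtain p3 where "p2 = forward_diff s p3"
      using translate_span_forward_diff p2(1) eq by metis
    with p1 p2 assms show False
      using forward_diff_cube_eq_0 by metis
  qed
  with sub show ?thesis by blast
qed

lemma translate_span_values:
  assumes "(3::'a::field) = 0" and "\<And>t. g t \<in> prime_subfield3" and "f \<in> translate_span g"
  shows "f t \<in> (prime_subfield3 :: 'a set)"
  using assms(3)
  by (rule translate_spanE) (auto intro!: prime_subfield3_sum[OF assms(1)] prime_subfield3_mult assms(2))

lemma translate_span_scale:
  assumes "k \<in> prime_subfield3" and "f \<in> translate_span g"
  shows "(\<lambda>t. k * f t) \<in> translate_span g"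
proof -
  obtain c where c: "\<forall>u. c u \<in> prime_subfield3" and f: "f = (\<lambda>t. \<Sum>u\<in>UNIV. c u * g (t + u))"
    using assms(2) by (rule translate_spanE)
  have "(\<lambda>t. k * f t) = (\<lambda>t. \<Sum>u\<in>UNIV. (k * c u) * g (t + u))"
    by (simp add: f sum_distrib_left mult.assoc)
  moreover have "\<forall>u. k * c u \<in> prime_subfield3"
    using c assms(1) prime_subfield3_mult by blast
  ultimately show ?thesis
    using translate_spanI[of "\<lambda>u. k * c u" g] by simp
qed

lemma const_one_in_translate_span:
  fixes g :: "'g::{finite,ab_group_add} \<Rightarrow> 'a::{field,finite}"
  assumes three: "(3::'a) = 0" and exponent3: "\<And>s::'g. s + s + s = 0"
    and g: "\<And>t. g t \<in> prime_subfield3" and "g \<noteq> (\<lambda>_. 0)"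
  shows "(\<lambda>_. 1) \<in> translate_span g"
proof -
  let ?P = "\<lambda>f. f \<in> translate_span g \<and> f \<noteq> (\<lambda>_. 0)"
  obtain f where f: "?P f"
    and minimal: "\<And>f'. ?P f' \<Longrightarrow> card (translate_span f) \<le> card (translate_span f')"
    using ex_has_least_nat[of ?P g "\<lambda>f. card (translate_span f)"] translate_span_self assms(4)
    by blast
  have invariant: "forward_diff s f = (\<lambda>_. 0)" for s
  proof (rule ccontr)
    assume nonzero: "forward_diff s f \<noteq> (\<lambda>_. 0)"
    have "forward_diff s f \<in> translate_span g"
      using f translate_span_mono[OF three] forward_diff_in_translate_span by blast
    with nonzero have "card (translate_span f) \<le> card (translate_span (forward_diff s f))"
      by (intro minimal) blast
    moreover have "card (translate_span (forward_diff s f)) < card (translate_span f)"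
      using f by (intro psubset_card_mono translate_span_forward_diff_psubset[OF three exponent3]) auto
    ultimately show False by simp
  qed
  have const: "f = (\<lambda>_. f 0)"
  proof
    fix t
    show "f t = f 0"
      using fun_cong[OF invariant[of t], of 0] by (simp add: forward_diff_def)
  qed
  have "f 0 \<in> prime_subfield3"
    using f translate_span_values[where g = g, OF three g] by blast
  moreover have "f 0 \<noteq> 0"
    using f const by auto
  ultimately have "(\<lambda>t. f 0 * f t) \<in> translate_span g" "f 0 * f 0 = 1"
    using f translate_span_scale prime_subfield3_square_eq_1 by auto
  then show ?thesis
    by (subst (asm) const) simp
qed

lemma translate_span_indicator_subset_span_incidence:
  fixes S :: "'g::{finite,ab_group_add} set"
  assumes three: "(3::'a::field) = 0" and blocks: "\<And>s. {t. t + s \<in> S} \<in> Bs"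
  shows "translate_span (\<lambda>t. if t \<in> S then 1 else 0 :: 'a) \<subseteq> span_F3_incidence Bs"
proof
  fix f assume "f \<in> translate_span (\<lambda>t. if t \<in> S then 1 else 0 :: 'a)"
  then obtain c where c: "\<forall>s. c s \<in> prime_subfield3"
    and f: "f = (\<lambda>t. \<Sum>s\<in>UNIV. c s * (if t + s \<in> S then 1 else 0))"
    by (rule translate_spanE)
  define block :: "'g \<Rightarrow> 'g set" where "block s = {t. t + s \<in> S}" for s
  define cB where "cB B = (\<Sum>s\<in>{s. block s = B}. c s)" for B
  have "f t = (\<Sum>B\<in>Bs. cB B * (if t \<in> B then 1 else 0))" for t
  proof -
    have "(\<Sum>B\<in>Bs. cB B * (if t \<in> B then 1 else 0))
        = (\<Sum>B\<in>Bs. \<Sum>s\<in>{s \<in> UNIV. block s = B}. c s * (if t \<in> block s then 1 else 0))"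
      unfolding cB_def sum_distrib_right by (intro sum.cong refl) auto
    also have "\<dots> = (\<Sum>s\<in>UNIV. c s * (if t \<in> block s then 1 else 0))"
      by (rule sum.group) (auto simp: blocks block_def)
    finally show ?thesis
      by (simp add: f block_def)
  qed
  moreover have "\<forall>B\<in>Bs. cB B \<in> prime_subfield3"
    unfolding cB_def using c by (auto intro!: prime_subfield3_sum[OF three])
  ultimately show "f \<in> span_F3_incidence Bs"
    unfolding span_F3_incidence_def by fastforce
qed

theorem lemma3p4:
  fixes m :: nat
  assumes "m \<ge> 2"
    and "card (UNIV :: 'a::{field,finite} set) = 3 ^ (2*m)"
  shows "(\<lambda>_. (1::'a)) \<in>
           span_F3_incidence (design_blocks (code_C m :: ('a \<Rightarrow> 'a) set)
                                            (min_weight (code_C m :: ('a \<Rightarrow> 'a) set)))"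
proof -
  let ?C = "code_C m :: ('a \<Rightarrow> 'a) set"
  have three: "(3::'a) = 0"
    using three_eq_zero_if_card_power_three[OF assms(2)] assms(1) by simp
  have frobenius: "x ^ (3 ^ (2*m)) = x" for x :: 'a
    using field_power_card_eq_self[of x] assms(2) by simp
  have "(\<lambda>_. 1::'a) \<noteq> (\<lambda>_. 0)"
    by (simp add: fun_eq_iff)
  then obtain c0 where c0: "c0 \<in> ?C" "c0 \<noteq> (\<lambda>_. 0)" "hweight c0 = min_weight ?C"
    using min_weight_attained const_one_in_code_C by blast
  let ?g = "\<lambda>t. if t \<in> {t. c0 t \<noteq> 0} then 1 else 0 :: 'a"
  have "(\<lambda>_. 1) \<in> translate_span ?g"
    using c0(2) triple_eq_0_char3[OF three]
    by (intro const_one_in_translate_span[OF three]) (auto simp: fun_eq_iff)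
  also have "\<dots> \<subseteq> span_F3_incidence (design_blocks ?C (min_weight ?C))"
    using translate_support_in_design_blocks[OF code_C_translate[OF three frobenius] c0(1,3)]
    by (intro translate_span_indicator_subset_span_incidence[OF three]) simp
  finally show ?thesis .
qed

end
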